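(* Let $\mu \vdash n$ with transpose $\mu'$. Define $\underline{d}_0 = 1$ and $\underline{d}_i = \underline{d}_{i-1} + (\mu'_i - 1)$ for $1 \leq i \leq \mu_1 - 1$. Then the Tanisaki ideal $\mathcal{I}_\mu$ is generated by the polynomials $\sigma \cdot g$ for $\sigma \in \mathfrak{S}_n$ and \[ g \in \{ e_{\underline{d}_1}(x_1, \ldots, x_{n-1}),\ e_{\underline{d}_2}(x_1, \ldots, x_{n-2}),\ \ldots,\ e_{\underline{d}_{\mu_1 - 1}}(x_1, \ldots, x_{n-\mu_1+1}),\ e_1(x_1, \ldots, x_n), \ldots, e_n(x_1, \ldots, x_n)\}. \]
   Context: $\mathfrak{S}_n$ acts on $\mathbb{Q}[x_1, \ldots, x_n]$ by $\sigma \cdot x_i = x_{\sigma(i)}$. For $S \subset [n]$, $e_r(S)$ is the elementary symmetric polynomial of degree $r$ in the variables $\{x_i : i \in S\}$. With $\mu'$ padded by zeros to have $n$ entries, let $d_k(\mu) = \mu'_n + \mu'_{n-1} + \cdots + \mu'_{n-k+1}$. The Tanisaki ideal is $\mathcal{I}_\mu = \langle e_r(S) : S \subset [n],\ |S| - d_{|S|}(\mu) < r \leq |S| \rangle \subset \mathbb{Q}[x_1, \ldots, x_n]$. *)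

theory Defs
  imports Complex_Main "HOL-Library.Poly_Mapping" "HOL-Combinatorics.Permutations"
begin

text \<open>Multivariate polynomials over the rationals: monomials are finitely supported
  exponent vectors \<open>nat \<Rightarrow>\<^sub>0 nat\<close> (variable \<open>x_i\<close> has index \<open>i\<close>), polynomials are
  finitely supported coefficient functions on monomials.\<close>
type_synonym mpoly = "(nat \<Rightarrow>\<^sub>0 nat) \<Rightarrow>\<^sub>0 rat"

definition Var :: "nat \<Rightarrow> mpoly" where
  "Var i = Poly_Mapping.single (Poly_Mapping.single i 1) 1"

definition poly_ring :: "nat \<Rightarrow> mpoly set" where
  "poly_ring n = {p. \<forall>m \<in> Poly_Mapping.keys p. Poly_Mapping.keys m \<subseteq> {1..n}}"

definition ideal_in :: "mpoly set \<Rightarrow> mpoly set \<Rightarrow> mpoly set" where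
  "ideal_in R S = {(\<Sum>g\<in>G. c g * g) | G c. finite G \<and> G \<subseteq> S \<and> (\<forall>g\<in>G. c g \<in> R)}"

text \<open>Action of a permutation: sigma . x_i = x_(sigma i); the monomial m goes to m o inv sigma.\<close>
definition perm_act :: "(nat \<Rightarrow> nat) \<Rightarrow> mpoly \<Rightarrow> mpoly" where
  "perm_act \<sigma> p = Poly_Mapping.map_key (Poly_Mapping.map_key \<sigma>) p"

definition esym :: "nat \<Rightarrow> nat set \<Rightarrow> mpoly" where
  "esym r S = (\<Sum>T \<in> {T. T \<subseteq> S \<and> card T = r}. \<Prod>i\<in>T. Var i)"

definition is_partition :: "nat list \<Rightarrow> nat \<Rightarrow> bool" where
  "is_partition \<mu> n \<longleftrightarrow> sorted_wrt (\<ge>) \<mu> \<and> (\<forall>x\<in>set \<mu>. 0 < x) \<and> sum_list \<mu> = n"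

text \<open>Transpose: conj mu i = mu'_i (1-indexed), zero-padded.\<close>
definition conj :: "nat list \<Rightarrow> nat \<Rightarrow> nat" where
  "conj \<mu> i = card {j. j < length \<mu> \<and> i \<le> \<mu> ! j}"

text \<open>First part mu_1 (0 for the empty partition).\<close>
definition part1 :: "nat list \<Rightarrow> nat" where
  "part1 \<mu> = (if \<mu> = [] then 0 else \<mu> ! 0)"

definition dk :: "nat list \<Rightarrow> nat \<Rightarrow> nat \<Rightarrow> nat" where
  "dk \<mu> n k = (\<Sum>i\<in>{n-k+1..n}. conj \<mu> i)"

definition tanisaki_gens :: "nat list \<Rightarrow> nat \<Rightarrow> mpoly set" where
  "tanisaki_gens \<mu> n = {esym r S | r S. S \<subseteq> {1..n} \<and>
      int (card S) - int (dk \<mu> n (card S)) < int r \<and> r \<le> card S}"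

definition tanisaki_ideal :: "nat list \<Rightarrow> nat \<Rightarrow> mpoly set" where
  "tanisaki_ideal \<mu> n = ideal_in (poly_ring n) (tanisaki_gens \<mu> n)"

text \<open>underline d_i: d_0 = 1, d_i = d_(i-1) + (mu'_i - 1).\<close>
definition dunder :: "nat list \<Rightarrow> nat \<Rightarrow> nat" where
  "dunder \<mu> i = 1 + (\<Sum>j\<in>{1..i}. (conj \<mu> j - 1))"

end

theory Submission
  imports Defs
begin

text \<open>Write |S| = n - i for a generator e_r(S) of the Tanisaki ideal. Since
  \<mu>'_1 + ... + \<mu>'_n = n, its defining condition |S| - d_{|S|}(\<mu>) < r \<le> |S| holds iff
  i < \<mu>_1 and dunder \<mu> i \<le> r \<le> |S|. The generators of lowest degree r = dunder \<mu> i are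
  permutations of e_r(x_1, ..., x_{n-i}), and all e_r(x_1, ..., x_n) are listed. The others
  follow by induction on i and then on r from e_{r+1}(S) = e_{r+1}(S \<union> {x}) - x e_r(S) for
  x \<notin> S, because dunder \<mu> is monotone.\<close>

section \<open>Ideals generated inside a subsemiring\<close>

locale mpoly_subsemiring =
  fixes R :: "mpoly set"
  assumes zero_mem: "0 \<in> R"
    and one_mem: "1 \<in> R"
    and add_mem: "a \<in> R \<Longrightarrow> b \<in> R \<Longrightarrow> a + b \<in> R"
    and mult_mem: "a \<in> R \<Longrightarrow> b \<in> R \<Longrightarrow> a * b \<in> R"
begin

lemma ideal_in_sumI:
  "finite G \<Longrightarrow> G \<subseteq> S \<Longrightarrow> (\<And>g. g \<in> G \<Longrightarrow> c g \<in> R) \<Longrightarrow> (\<Sum>g\<in>G. c g * g) \<in> ideal_in R S"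
  unfolding ideal_in_def by blast

lemma ideal_in_zero: "0 \<in> ideal_in R S"
  using ideal_in_sumI[of "{}"] by simp

lemma ideal_in_generator: "g \<in> S \<Longrightarrow> g \<in> ideal_in R S"
  using ideal_in_sumI[of "{g}" S "\<lambda>_. 1"] one_mem by simp

lemma ideal_in_mult_left:
  assumes "r \<in> R" "p \<in> ideal_in R S"
  shows "r * p \<in> ideal_in R S"
proof -
  obtain G c where p: "p = (\<Sum>g\<in>G. c g * g)" "finite G" "G \<subseteq> S" "\<forall>g\<in>G. c g \<in> R"
    using assms(2) unfolding ideal_in_def by blast
  have "r * p = (\<Sum>g\<in>G. (r * c g) * g)"
    by (simp add: p(1) sum_distrib_left mult.assoc)
  also have "\<dots> \<in> ideal_in R S"
    using p(2-4) assms(1) by (auto intro!: ideal_in_sumI mult_mem)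
  finally show ?thesis .
qed

lemma ideal_in_add:
  assumes "p \<in> ideal_in R S" "q \<in> ideal_in R S"
  shows "p + q \<in> ideal_in R S"
proof -
  obtain G c where p: "p = (\<Sum>g\<in>G. c g * g)" "finite G" "G \<subseteq> S" "\<forall>g\<in>G. c g \<in> R"
    using assms(1) unfolding ideal_in_def by blast
  obtain H d where q: "q = (\<Sum>g\<in>H. d g * g)" "finite H" "H \<subseteq> S" "\<forall>g\<in>H. d g \<in> R"
    using assms(2) unfolding ideal_in_def by blast
  define c' where "c' g = (if g \<in> G then c g else 0)" for g
  define d' where "d' g = (if g \<in> H then d g else 0)" for g
  have "p = (\<Sum>g\<in>G \<union> H. c' g * g)"
    unfolding p(1) c'_def using p(2) q(2) by (intro sum.mono_neutral_cong_left) auto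
  moreover have "q = (\<Sum>g\<in>G \<union> H. d' g * g)"
    unfolding q(1) d'_def using p(2) q(2) by (intro sum.mono_neutral_cong_left) auto
  ultimately have "p + q = (\<Sum>g\<in>G \<union> H. (c' g + d' g) * g)"
    by (simp add: distrib_right sum.distrib)
  also have "\<dots> \<in> ideal_in R S"
    using p(2-4) q(2-4) by (intro ideal_in_sumI) (auto simp: c'_def d'_def intro: add_mem zero_mem)
  finally show ?thesis .
qed

lemma ideal_in_subset:
  assumes "A \<subseteq> ideal_in R B"
  shows "ideal_in R A \<subseteq> ideal_in R B"
proof
  fix p assume "p \<in> ideal_in R A"
  then obtain G c where p: "p = (\<Sum>g\<in>G. c g * g)" "finite G" "G \<subseteq> A" "\<forall>g\<in>G. c g \<in> R"
    unfolding ideal_in_def by blast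
  from p(2-4) have "(\<Sum>g\<in>G. c g * g) \<in> ideal_in R B"
    by (induction G rule: finite_induct)
      (use assms in \<open>auto intro: ideal_in_zero ideal_in_add ideal_in_mult_left\<close>)
  with p(1) show "p \<in> ideal_in R B" by simp
qed

lemma ideal_in_eqI:
  "A \<subseteq> ideal_in R B \<Longrightarrow> B \<subseteq> ideal_in R A \<Longrightarrow> ideal_in R A = ideal_in R B"
  by (intro equalityI ideal_in_subset)

end

interpretation poly_ring: mpoly_subsemiring "poly_ring n"
proof
  fix a b assume a: "a \<in> poly_ring n" and b: "b \<in> poly_ring n"
  show "a + b \<in> poly_ring n"
    using a b keys_add[of a b] unfolding poly_ring_def by blast
  show "a * b \<in> poly_ring n"
    unfolding poly_ring_def
  proof (intro CollectI ballI)
    fix m assume "m \<in> Poly_Mapping.keys (a * b)"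
    then obtain u v where "m = u + v" "u \<in> Poly_Mapping.keys a" "v \<in> Poly_Mapping.keys b"
      using keys_mult by blast
    then show "Poly_Mapping.keys m \<subseteq> {1..n}"
      using a b keys_add[of u v] unfolding poly_ring_def by blast
  qed
qed (simp_all add: poly_ring_def)

lemma poly_ring_uminus: "a \<in> poly_ring n \<Longrightarrow> - a \<in> poly_ring n"
  unfolding poly_ring_def by simp

lemma Var_mem_poly_ring: "i \<in> {1..n} \<Longrightarrow> Var i \<in> poly_ring n"
  unfolding poly_ring_def Var_def by simp

section \<open>Elementary symmetric polynomials under permutations\<close>

lemma prod_Var_eq_single:
  "(\<Prod>i\<in>T. Var i) = Poly_Mapping.single (\<Sum>i\<in>T. Poly_Mapping.single i 1) 1"
  by (induction T rule: infinite_finite_induct) (simp_all add: Var_def mult_single)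

lemma map_key_sum:
  assumes "inj f"
  shows "Poly_Mapping.map_key f (\<Sum>x\<in>T. g x) = (\<Sum>x\<in>T. Poly_Mapping.map_key f (g x))"
  by (induction T rule: infinite_finite_induct) (simp_all add: map_key_plus[OF assms] assms)

lemma inj_map_key:
  assumes "bij \<sigma>"
  shows "inj (Poly_Mapping.map_key \<sigma> :: ('a \<Rightarrow>\<^sub>0 'b::zero) \<Rightarrow> _)"
proof (rule inj_on_inverseI)
  fix m :: "'a \<Rightarrow>\<^sub>0 'b"
  have "inj \<sigma>" "inj (inv \<sigma>)"
    using assms bij_is_inj bij_imp_bij_inv by auto
  then have "Poly_Mapping.map_key (inv \<sigma>) (Poly_Mapping.map_key \<sigma> m) = Poly_Mapping.map_key (\<sigma> \<circ> inv \<sigma>) m"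
    by (rule map_key_compose[rotated])
  also have "\<sigma> \<circ> inv \<sigma> = id"
    using assms bij_is_surj surj_iff by blast
  finally show "Poly_Mapping.map_key (inv \<sigma>) (Poly_Mapping.map_key \<sigma> m) = m"
    by (simp add: id_def map_key_id)
qed

lemma perm_act_prod_Var:
  assumes "bij \<sigma>"
  shows "perm_act \<sigma> (\<Prod>i\<in>T. Var i) = (\<Prod>i\<in>\<sigma> ` T. Var i)"
proof -
  have inj: "inj \<sigma>"
    using assms bij_is_inj by auto
  have "(\<Sum>i\<in>T. Poly_Mapping.single i 1) = Poly_Mapping.map_key \<sigma> (\<Sum>i\<in>\<sigma> ` T. Poly_Mapping.single i (1::nat))"
    by (simp add: map_key_sum[OF inj] sum.reindex inj_on_subset[OF inj] inj)
  then show ?thesis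
    unfolding perm_act_def prod_Var_eq_single
    by (simp add: map_key_single[OF inj_map_key[OF assms]])
qed

lemma perm_act_esym:
  assumes "bij \<sigma>"
  shows "perm_act \<sigma> (esym r S) = esym r (\<sigma> ` S)"
proof -
  have inj: "inj \<sigma>"
    using assms bij_is_inj by auto
  have subsets: "{U. U \<subseteq> \<sigma> ` S \<and> card U = r} = image \<sigma> ` {T. T \<subseteq> S \<and> card T = r}"
    by (auto simp: subset_image_iff card_image inj_on_subset[OF inj])
  have "perm_act \<sigma> (esym r S) = (\<Sum>T | T \<subseteq> S \<and> card T = r. \<Prod>i\<in>\<sigma> ` T. Var i)"
    using perm_act_prod_Var[OF assms]
    by (simp add: esym_def perm_act_def map_key_sum[OF inj_map_key[OF assms]])
  also have "\<dots> = esym r (\<sigma> ` S)"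
    unfolding esym_def subsets by (simp add: sum.reindex inj_on_def inj_image_eq_iff[OF inj])
  finally show ?thesis .
qed

lemma esym_eq_0: "finite S \<Longrightarrow> card S < r \<Longrightarrow> esym r S = 0"
  unfolding esym_def by (auto intro!: sum.neutral dest: card_mono)

lemma subsets_card_Suc_insert:
  assumes "finite S" "x \<notin> S"
  shows "{T. T \<subseteq> insert x S \<and> card T = Suc r} =
    {T. T \<subseteq> S \<and> card T = Suc r} \<union> insert x ` {T. T \<subseteq> S \<and> card T = r}"
    (is "?L = ?A \<union> insert x ` ?B")
proof (intro equalityI subsetI)
  fix T assume T: "T \<in> ?L"
  show "T \<in> ?A \<union> insert x ` ?B"
  proof (cases "x \<in> T")
    case True
    from T have "T \<subseteq> insert x S" "card T = Suc r"
      by simp_all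
    moreover have "finite T"
      using calculation(1) assms(1) finite_subset by auto
    ultimately have "T - {x} \<in> ?B"
      using True by (auto simp: card_Diff_singleton)
    moreover have "T = insert x (T - {x})"
      using True by blast
    ultimately show ?thesis
      by blast
  next
    case False
    then show ?thesis
      using T by auto
  qed
next
  fix T assume "T \<in> ?A \<union> insert x ` ?B"
  then show "T \<in> ?L"
  proof
    assume "T \<in> insert x ` ?B"
    then obtain U where U: "U \<subseteq> S" "card U = r" "T = insert x U"
      by auto
    moreover have "finite U" "x \<notin> U"
      using U(1) assms finite_subset by auto
    ultimately show ?thesis
      by auto
  qed auto
qed

lemma esym_insert:
  assumes "finite S" "x \<notin> S"
  shows "esym (Suc r) (insert x S) = esym (Suc r) S + Var x * esym r S"
proof -
  have fin: "finite {T. T \<subseteq> S \<and> card T = k}" for k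
    using assms(1) by auto
  have inj: "inj_on (insert x) {T. T \<subseteq> S \<and> card T = r}"
    using assms(2) unfolding inj_on_def by (metis insert_ident mem_Collect_eq subsetD)
  have "esym (Suc r) (insert x S) =
      esym (Suc r) S + (\<Sum>T\<in>insert x ` {T. T \<subseteq> S \<and> card T = r}. \<Prod>i\<in>T. Var i)"
    unfolding esym_def subsets_card_Suc_insert[OF assms] using fin assms(2)
    by (intro sum.union_disjoint) auto
  also have "(\<Sum>T\<in>insert x ` {T. T \<subseteq> S \<and> card T = r}. \<Prod>i\<in>T. Var i) = Var x * esym r S"
    unfolding esym_def sum.reindex[OF inj] sum_distrib_left
  proof (rule sum.cong)
    fix T assume "T \<in> {T. T \<subseteq> S \<and> card T = r}"
    then have "finite T" "x \<notin> T"
      using assms finite_subset by auto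
    then show "((\<lambda>T. \<Prod>i\<in>T. Var i) \<circ> insert x) T = Var x * (\<Prod>i\<in>T. Var i)"
      by simp
  qed simp
  finally show ?thesis .
qed

lemma exists_permutes_image:
  assumes "finite A" "S \<subseteq> A" "T \<subseteq> A" "card T = card S"
  obtains \<sigma> where "\<sigma> permutes A" "\<sigma> ` T = S"
proof -
  obtain f where f: "bij_betw f T S"
    using finite_same_card_bij assms finite_subset by metis
  have "card (A - T) = card (A - S)"
    using assms by (simp add: card_Diff_subset finite_subset)
  then obtain g where g: "bij_betw g (A - T) (A - S)"
    using finite_same_card_bij assms(1) by blast
  define \<sigma> where "\<sigma> x = (if x \<in> T then f x else if x \<in> A then g x else x)" for x
  have "bij_betw \<sigma> (T \<union> (A - T)) (S \<union> (A - S))"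
  proof (rule bij_betw_combine)
    show "bij_betw \<sigma> T S"
      using f by (rule bij_betw_cong[THEN iffD1, rotated]) (simp add: \<sigma>_def)
    show "bij_betw \<sigma> (A - T) (A - S)"
      using g by (rule bij_betw_cong[THEN iffD1, rotated]) (simp add: \<sigma>_def)
  qed auto
  then have "bij_betw \<sigma> A A"
    using assms(2,3) by (simp add: Un_absorb1)
  then have "\<sigma> permutes A"
    by (rule bij_imp_permutes) (use assms(3) in \<open>auto simp: \<sigma>_def\<close>)
  moreover have "\<sigma> ` T = S"
    using bij_betw_imp_surj_on[OF f] by (auto simp: \<sigma>_def)
  ultimately show ?thesis by (rule that)
qed

section \<open>Partitions and their conjugates\<close>

lemma partition_nth_le: "is_partition \<mu> n \<Longrightarrow> k < length \<mu> \<Longrightarrow> \<mu> ! k \<le> n"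
  unfolding is_partition_def using elem_le_sum_list by blast

lemma sorted_nth_le_part1: "sorted_wrt (\<ge>) \<mu> \<Longrightarrow> k < length \<mu> \<Longrightarrow> \<mu> ! k \<le> part1 \<mu>"
  unfolding part1_def by (cases k) (auto dest: sorted_wrt_nth_less)

lemma part1_le: "is_partition \<mu> n \<Longrightarrow> part1 \<mu> \<le> n"
  unfolding part1_def using partition_nth_le[of \<mu> n 0] by auto

lemma part1_pos: "is_partition \<mu> n \<Longrightarrow> 0 < n \<Longrightarrow> 0 < part1 \<mu>"
  unfolding is_partition_def part1_def by (cases \<mu>) auto

lemma conj_eq_0: "sorted_wrt (\<ge>) \<mu> \<Longrightarrow> part1 \<mu> < j \<Longrightarrow> conj \<mu> j = 0"
  unfolding conj_def using sorted_nth_le_part1[of \<mu>] by fastforce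

lemma conj_pos: "0 < j \<Longrightarrow> j \<le> part1 \<mu> \<Longrightarrow> 0 < conj \<mu> j"
  unfolding conj_def part1_def by (cases "\<mu> = []") (auto simp: card_gt_0_iff)

lemma mono_dunder: "mono (dunder \<mu>)"
  unfolding mono_iff_le_Suc dunder_def by simp

lemma sum_conj:
  assumes "is_partition \<mu> n"
  shows "(\<Sum>j=1..n. conj \<mu> j) = n"
proof -
  have "conj \<mu> j = (\<Sum>k<length \<mu>. if j \<le> \<mu> ! k then 1 else 0)" for j
    unfolding conj_def by (simp add: sum.If_cases Collect_conj_eq lessThan_def Int_commute)
  then have "(\<Sum>j=1..n. conj \<mu> j) = (\<Sum>k<length \<mu>. \<Sum>j=1..n. if j \<le> \<mu> ! k then 1 else 0)"
    using sum.swap by simp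
  also have "\<dots> = (\<Sum>k<length \<mu>. \<mu> ! k)"
  proof (rule sum.cong)
    fix k assume "k \<in> {..<length \<mu>}"
    then have "{1..n} \<inter> {j. j \<le> \<mu> ! k} = {1..\<mu> ! k}"
      using partition_nth_le[OF assms, of k] by auto
    then show "(\<Sum>j=1..n. if j \<le> \<mu> ! k then 1 else 0) = \<mu> ! k"
      by (simp add: sum.If_cases)
  qed simp
  also have "\<dots> = n"
    using assms by (simp add: is_partition_def sum_list_sum_nth atLeast0LessThan)
  finally show ?thesis .
qed

text \<open>For |S| = n - i this is |S| - d_{|S|}(\<mu>) = \<mu>'_1 + ... + \<mu>'_i - i = dunder \<mu> i - 1,
  stated without subtraction.\<close>
lemma dk_add_dunder:
  assumes "is_partition \<mu> n" "i < part1 \<mu>"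
  shows "dk \<mu> n (n - i) + dunder \<mu> i = n - i + 1"
proof -
  have i_le: "i \<le> n"
    using part1_le[OF assms(1)] assms(2) by simp
  have "(\<Sum>j=1..i. conj \<mu> j) = (\<Sum>j=1..i. (conj \<mu> j - 1) + 1)"
    using conj_pos[of _ \<mu>] assms(2) by (intro sum.cong) auto
  also have "\<dots> = (\<Sum>j=1..i. conj \<mu> j - 1) + i"
    by (simp only: sum.distrib) simp
  finally have dunder: "dunder \<mu> i + i = 1 + (\<Sum>j=1..i. conj \<mu> j)"
    unfolding dunder_def by simp
  have "n = (\<Sum>j=1..i + (n - i). conj \<mu> j)"
    using i_le sum_conj[OF assms(1)] by simp
  also have "\<dots> = (\<Sum>j=1..i. conj \<mu> j) + dk \<mu> n (n - i)"
    unfolding dk_def using i_le sum.ub_add_nat[of 1 i "conj \<mu>" "n - i"] by simp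
  finally show ?thesis
    using dunder i_le by linarith
qed

lemma dk_eq_0: "sorted_wrt (\<ge>) \<mu> \<Longrightarrow> part1 \<mu> \<le> i \<Longrightarrow> dk \<mu> n (n - i) = 0"
  unfolding dk_def by (auto intro!: sum.neutral conj_eq_0)

section \<open>The Tanisaki generators\<close>

lemma tanisaki_gens_eq:
  assumes "is_partition \<mu> n"
  shows "tanisaki_gens \<mu> n = {esym r S | r S. S \<subseteq> {1..n} \<and> n - card S < part1 \<mu> \<and>
    dunder \<mu> (n - card S) \<le> r \<and> r \<le> card S}"
proof -
  have iff: "int (card S) - int (dk \<mu> n (card S)) < int r \<longleftrightarrow>
      n - card S < part1 \<mu> \<and> dunder \<mu> (n - card S) \<le> r"
    if "S \<subseteq> {1..n}" "r \<le> card S" for r S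
  proof -
    define i where "i = n - card S"
    have "card S \<le> n"
      using that(1) card_mono[of "{1..n}" S] by simp
    then have card_S: "card S = n - i"
      unfolding i_def by simp
    have "int (card S) - int (dk \<mu> n (card S)) < int r \<longleftrightarrow> i < part1 \<mu> \<and> dunder \<mu> i \<le> r"
    proof (cases "i < part1 \<mu>")
      case True
      have "int (dk \<mu> n (n - i)) + int (dunder \<mu> i) = int (n - i) + 1"
        using arg_cong[OF dk_add_dunder[OF assms True], of int] by simp
      with True show ?thesis
        unfolding card_S by linarith
    next
      case False
      then have "dk \<mu> n (card S) = 0"
        using dk_eq_0[of \<mu> i n] assms unfolding card_S is_partition_def by simp
      with False that(2) show ?thesis
        by simp
    qed
    then show ?thesis
      unfolding i_def .
  qed
  have "S \<subseteq> {1..n} \<and> int (card S) - int (dk \<mu> n (card S)) < int r \<and> r \<le> card S \<longleftrightarrow>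
      S \<subseteq> {1..n} \<and> n - card S < part1 \<mu> \<and> dunder \<mu> (n - card S) \<le> r \<and> r \<le> card S" for r S
    using iff[of S r] by blast
  then show ?thesis
    unfolding tanisaki_gens_def by (simp only:)
qed

lemma esym_mem_tanisaki_ideal:
  assumes "is_partition \<mu> n" "S \<subseteq> {1..n}" "n - card S < part1 \<mu>" "dunder \<mu> (n - card S) \<le> r"
  shows "esym r S \<in> tanisaki_ideal \<mu> n"
proof (cases "r \<le> card S")
  case True
  with assms have "esym r S \<in> tanisaki_gens \<mu> n"
    by (auto simp: tanisaki_gens_eq)
  then show ?thesis
    unfolding tanisaki_ideal_def by (rule poly_ring.ideal_in_generator)
next
  case False
  then show ?thesis
    using assms(2) finite_subset[OF assms(2)]
    by (simp add: esym_eq_0 tanisaki_ideal_def poly_ring.ideal_in_zero)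
qed

lemma esym_mem_ideal_from_lowest_degrees:
  fixes d :: "nat \<Rightarrow> nat"
  assumes "mono d" "m \<le> n"
    and top: "\<And>r. d 0 \<le> r \<Longrightarrow> esym r {1..n} \<in> ideal_in (poly_ring n) G"
    and lowest: "\<And>i S. 0 < i \<Longrightarrow> i < m \<Longrightarrow> S \<subseteq> {1..n} \<Longrightarrow> card S = n - i \<Longrightarrow>
      esym (d i) S \<in> ideal_in (poly_ring n) G"
  shows "i < m \<Longrightarrow> S \<subseteq> {1..n} \<Longrightarrow> card S = n - i \<Longrightarrow> d i \<le> r \<Longrightarrow>
    esym r S \<in> ideal_in (poly_ring n) G"
proof (induction i arbitrary: S r)
  case 0
  then have "S = {1..n}"
    by (intro card_subset_eq) auto
  with 0 top show ?case
    by simp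
next
  case (Suc i)
  have fin: "finite S"
    using Suc.prems(2) finite_subset by blast
  have "card S < n"
    using Suc.prems(1,3) assms(2) by simp
  then have "\<not> {1..n} \<subseteq> S"
    using card_mono[OF fin, of "{1..n}"] by auto
  then obtain x where x: "x \<in> {1..n}" "x \<notin> S"
    by blast
  from \<open>d (Suc i) \<le> r\<close> show ?case
  proof (induction r rule: dec_induct)
    case base
    show ?case
      using lowest Suc.prems by simp
  next
    case (step r)
    have "d i \<le> Suc r"
      using monoD[OF assms(1), of i "Suc i"] step(1) by simp
    moreover have "card (insert x S) = n - i"
      using fin x(2) Suc.prems(1,3) assms(2) by simp
    ultimately have "esym (Suc r) (insert x S) \<in> ideal_in (poly_ring n) G"
      using Suc.IH Suc.prems(1,2) x(1) by simp
    moreover have "- Var x * esym r S \<in> ideal_in (poly_ring n) G"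
      using step(3) x(1)
      by (intro poly_ring.ideal_in_mult_left poly_ring_uminus Var_mem_poly_ring)
    ultimately have "esym (Suc r) (insert x S) + - Var x * esym r S \<in> ideal_in (poly_ring n) G"
      by (rule poly_ring.ideal_in_add)
    then show ?case
      using esym_insert[OF fin x(2)] by simp
  qed
qed

definition perm_orbits :: "nat \<Rightarrow> mpoly set \<Rightarrow> mpoly set" where
  "perm_orbits n B = {perm_act \<sigma> g | \<sigma> g. \<sigma> permutes {1..n} \<and> g \<in> B}"

definition dunder_gens :: "nat list \<Rightarrow> nat \<Rightarrow> mpoly set" where
  "dunder_gens \<mu> n = {esym (dunder \<mu> i) {1..n-i} | i. 1 \<le> i \<and> i \<le> part1 \<mu> - 1}
    \<union> {esym r {1..n} | r. 1 \<le> r \<and> r \<le> n}"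

lemma esym_mem_perm_orbits:
  assumes "esym r T \<in> B" "T \<subseteq> {1..n}" "S \<subseteq> {1..n}" "card T = card S"
  shows "esym r S \<in> perm_orbits n B"
proof -
  obtain \<sigma> where \<sigma>: "\<sigma> permutes {1..n}" "\<sigma> ` T = S"
    using exists_permutes_image[of "{1..n}" S T] assms(2-4) by blast
  then have "esym r S = perm_act \<sigma> (esym r T)"
    by (simp add: perm_act_esym permutes_bij)
  with \<sigma>(1) assms(1) show ?thesis
    unfolding perm_orbits_def by blast
qed

lemma tanisaki_gens_subset_perm_orbits_ideal:
  assumes "is_partition \<mu> n"
  shows "tanisaki_gens \<mu> n \<subseteq> ideal_in (poly_ring n) (perm_orbits n (dunder_gens \<mu> n))"
proof
  fix p assume "p \<in> tanisaki_gens \<mu> n"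
  then obtain r S where p: "p = esym r S" and S: "S \<subseteq> {1..n}" "n - card S < part1 \<mu>"
      and r: "dunder \<mu> (n - card S) \<le> r"
    using assms by (auto simp: tanisaki_gens_eq)
  have "card S \<le> n"
    using S(1) card_mono[of "{1..n}" S] by simp
  have "esym r S \<in> ideal_in (poly_ring n) (perm_orbits n (dunder_gens \<mu> n))"
  proof (rule esym_mem_ideal_from_lowest_degrees[OF mono_dunder part1_le[OF assms] _ _ S(2,1) _ r])
    fix r assume "dunder \<mu> 0 \<le> r"
    then have "1 \<le> r"
      by (simp add: dunder_def)
    show "esym r {1..n} \<in> ideal_in (poly_ring n) (perm_orbits n (dunder_gens \<mu> n))"
    proof (cases "r \<le> n")
      case True
      with \<open>1 \<le> r\<close> have "esym r {1..n} \<in> dunder_gens \<mu> n"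
        unfolding dunder_gens_def by blast
      then have "esym r {1..n} \<in> perm_orbits n (dunder_gens \<mu> n)"
        by (rule esym_mem_perm_orbits) simp_all
      then show ?thesis
        by (rule poly_ring.ideal_in_generator)
    next
      case False
      then show ?thesis
        by (simp add: esym_eq_0 poly_ring.ideal_in_zero)
    qed
  next
    fix i T assume i: "0 < i" "i < part1 \<mu>" and T: "T \<subseteq> {1..n}" "card T = n - i"
    from i have "esym (dunder \<mu> i) {1..n-i} \<in> dunder_gens \<mu> n"
      unfolding dunder_gens_def by force
    then have "esym (dunder \<mu> i) T \<in> perm_orbits n (dunder_gens \<mu> n)"
      by (rule esym_mem_perm_orbits) (use T in auto)
    then show "esym (dunder \<mu> i) T \<in> ideal_in (poly_ring n) (perm_orbits n (dunder_gens \<mu> n))"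
      by (rule poly_ring.ideal_in_generator)
  qed (use \<open>card S \<le> n\<close> in simp)
  with p show "p \<in> ideal_in (poly_ring n) (perm_orbits n (dunder_gens \<mu> n))"
    by simp
qed

lemma perm_orbits_dunder_gens_subset_tanisaki_ideal:
  assumes "is_partition \<mu> n"
  shows "perm_orbits n (dunder_gens \<mu> n) \<subseteq> tanisaki_ideal \<mu> n"
proof
  fix p assume "p \<in> perm_orbits n (dunder_gens \<mu> n)"
  then obtain \<sigma> g where p: "p = perm_act \<sigma> g" and \<sigma>: "\<sigma> permutes {1..n}"
      and g: "g \<in> dunder_gens \<mu> n"
    unfolding perm_orbits_def by blast
  have image: "\<sigma> ` T \<subseteq> {1..n}" "card (\<sigma> ` T) = card T" if "T \<subseteq> {1..n}" for T
    using that permutes_image[OF \<sigma>] permutes_inj_on[OF \<sigma>]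
    by (auto simp: card_image inj_on_subset)
  from g consider
      (lower) i where "g = esym (dunder \<mu> i) {1..n-i}" "1 \<le> i" "i \<le> part1 \<mu> - 1"
    | (top) r where "g = esym r {1..n}" "1 \<le> r" "r \<le> n"
    unfolding dunder_gens_def by blast
  then show "p \<in> tanisaki_ideal \<mu> n"
  proof cases
    case lower
    then have "i < part1 \<mu>" "i \<le> n"
      using part1_le[OF assms] by simp_all
    have "p = esym (dunder \<mu> i) (\<sigma> ` {1..n-i})"
      using lower(1) by (simp add: p perm_act_esym permutes_bij[OF \<sigma>])
    moreover have "n - card (\<sigma> ` {1..n-i}) = i"
      using image(2)[of "{1..n-i}"] \<open>i \<le> n\<close> by simp
    ultimately show ?thesis
      using esym_mem_tanisaki_ideal[OF assms image(1)[of "{1..n-i}"], of "dunder \<mu> i"] \<open>i < part1 \<mu>\<close>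
      by simp
  next
    case top
    have "p = esym r {1..n}"
      using top(1) permutes_image[OF \<sigma>] by (simp add: p perm_act_esym permutes_bij[OF \<sigma>])
    moreover have "0 < part1 \<mu>"
      using part1_pos[OF assms] top(2,3) by simp
    ultimately show ?thesis
      using esym_mem_tanisaki_ideal[OF assms order_refl, of r] top(2) by (simp add: dunder_def)
  qed
qed

theorem lemma2p1:
  fixes \<mu> :: "nat list" and n :: nat
  assumes "is_partition \<mu> n"
  shows "tanisaki_ideal \<mu> n =
    ideal_in (poly_ring n)
      {perm_act \<sigma> g | \<sigma> g. \<sigma> permutes {1..n} \<and>
         g \<in> {esym (dunder \<mu> i) {1..n-i} | i. 1 \<le> i \<and> i \<le> part1 \<mu> - 1}
              \<union> {esym r {1..n} | r. 1 \<le> r \<and> r \<le> n}}"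
proof -
  have "tanisaki_ideal \<mu> n = ideal_in (poly_ring n) (perm_orbits n (dunder_gens \<mu> n))"
    unfolding tanisaki_ideal_def
    using tanisaki_gens_subset_perm_orbits_ideal[OF assms]
      perm_orbits_dunder_gens_subset_tanisaki_ideal[OF assms, unfolded tanisaki_ideal_def]
    by (rule poly_ring.ideal_in_eqI)
  then show ?thesis
    unfolding perm_orbits_def dunder_gens_def .
qed

end
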